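(* Let $c$ be a real number with $2<c<4$. There exists $k_0(c)$ such that for all integers $k>k_0(c)$ for which $n=ck$ is an integer, the family $$\mathcal A_k(n,k)=\Big\{A\in\binom{[n]}{k}: 1\in A,\ A\cap[2,k+1]\neq\varnothing\Big\}\cup\{[2,k+1]\}$$ is intersecting and satisfies $$|\mathcal D(\mathcal A_k(n,k))|>\sum_{0\le\ell<k}\binom{n-1}{\ell}.$$
   Context: $[n]=\{1,\dots,n\}$, $[a,b]=\{a,a+1,\dots,b\}$; $\binom{[n]}{k}$ is the family of all $k$-element subsets of $[n]$. $\mathcal D(\mathcal F):=\{F\setminus F' : F,F'\in\mathcal F\}$. *)

theory Defs
  imports Complex_Main
begin

definition diff_family :: "'a set set \<Rightarrow> 'a set set" where
  "diff_family F = {A - B | A B. A \<in> F \<and> B \<in> F}"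

definition intersecting :: "'a set set \<Rightarrow> bool" where
  "intersecting F \<longleftrightarrow> (\<forall>A\<in>F. \<forall>B\<in>F. A \<inter> B \<noteq> {})"

definition fam_Ak :: "nat \<Rightarrow> nat \<Rightarrow> nat set set" where
  "fam_Ak n k = {A. A \<subseteq> {1..n} \<and> card A = k \<and> 1 \<in> A \<and> A \<inter> {2..k+1} \<noteq> {}} \<union> {{2..k+1}}"

end

theory Submission
  imports Defs
begin

text \<open>
  Every \<open>S \<subseteq> [2,n]\<close> with \<open>|S| < k\<close> is a difference \<open>A - B\<close> of two members of the family,
  except possibly the \<open>(k-1)\<close>-subsets of \<open>[k+2,n]\<close>; moreover \<open>{1} \<union> R\<close> arises as
  \<open>A - [2,k+1]\<close> for every \<open>R \<subseteq> [k+2,n]\<close> with \<open>|R| < k-1\<close>. With \<open>m = n-k-1\<close> it therefore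
  suffices that \<open>C(m,k-1) < C(m,0) + \<dots> + C(m,k-2)\<close>. Going down from \<open>k-1\<close>, the ratios
  \<open>C(m,l-1)/C(m,l) = l/(m-l+1)\<close> stay above \<open>q = 2/c\<close> for any fixed number \<open>T\<close> of steps once
  \<open>k\<close> is large (this is where \<open>c < 4\<close> enters), and since \<open>q > 1/2\<close> some \<open>T\<close> gives
  \<open>q + \<dots> + q\<^sup>T > 1\<close>.
\<close>

lemma binomial_Suc_times_eq: "Suc l * (m choose Suc l) = (m - l) * (m choose l)"
  by (simp only: binomial_absorption binomial_absorb_comp)

lemma binomial_geometric_decay_below:
  fixes q :: real
  assumes "0 \<le> q" "t \<le> j"
    and ratio: "\<And>i. i < t \<Longrightarrow> q * (real a + real i + 1) \<le> real j - real i"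
  shows "q ^ t * real ((j + a) choose j) \<le> real ((j + a) choose (j - t))"
  using assms(2) ratio
proof (induction t)
  case 0
  then show ?case by simp
next
  case (Suc i)
  have "Suc (j - Suc i) = j - i" "j + a - (j - Suc i) = a + i + 1"
    using Suc.prems(1) by auto
  then have "(j - i) * ((j + a) choose (j - i)) = (a + i + 1) * ((j + a) choose (j - Suc i))"
    using binomial_Suc_times_eq[of "j - Suc i" "j + a"] by simp
  then have "real (j - i) * real ((j + a) choose (j - i))
      = (real a + real i + 1) * real ((j + a) choose (j - Suc i))"
    by (metis of_nat_mult of_nat_add of_nat_1)
  then have step: "real ((j + a) choose (j - i)) * (real j - real i)
      = real ((j + a) choose (j - Suc i)) * (real a + real i + 1)"
    using Suc.prems(1) by (simp add: mult.commute)
  have "q ^ Suc i * real ((j + a) choose j) * (real a + real i + 1)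
      = q * (q ^ i * real ((j + a) choose j)) * (real a + real i + 1)"
    by simp
  also have "\<dots> \<le> q * real ((j + a) choose (j - i)) * (real a + real i + 1)"
    using Suc \<open>0 \<le> q\<close> by (intro mult_right_mono mult_left_mono) auto
  also have "\<dots> \<le> real ((j + a) choose (j - i)) * (real j - real i)"
    using mult_left_mono[OF Suc.prems(2)[of i], of "real ((j + a) choose (j - i))"]
    by (simp add: mult_ac)
  finally show ?case
    by (simp add: step mult_le_cancel_right add_pos_nonneg)
qed

lemma binomial_lt_sum_below:
  fixes q :: real
  assumes "0 \<le> q" "T \<le> j" and geometric: "1 < (\<Sum>t = 1..T. q ^ t)"
    and ratio: "\<And>i. i < T \<Longrightarrow> q * (real a + real i + 1) \<le> real j - real i"
  shows "(j + a) choose j < (\<Sum>l<j. (j + a) choose l)"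
proof -
  let ?b = "\<lambda>l. real ((j + a) choose l)"
  have "?b j < (\<Sum>t = 1..T. q ^ t) * ?b j"
    using geometric by simp
  also have "\<dots> \<le> (\<Sum>t = 1..T. ?b (j - t))"
    unfolding sum_distrib_right
    using binomial_geometric_decay_below[OF \<open>0 \<le> q\<close> _ ratio] \<open>T \<le> j\<close>
    by (intro sum_mono) auto
  also have "\<dots> = (\<Sum>l \<in> (\<lambda>t. j - t) ` {1..T}. ?b l)"
    using \<open>T \<le> j\<close> by (subst sum.reindex) (auto simp: inj_on_def)
  also have "\<dots> \<le> (\<Sum>l<j. ?b l)"
    using \<open>T \<le> j\<close> by (intro sum_mono2) auto
  finally show ?thesis
    by (simp flip: of_nat_sum)
qed

lemma geometric_sum_exceeds_one:
  fixes q :: real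
  assumes "1/2 < q" "q < 1"
  obtains T where "1 < (\<Sum>t = 1..T. q ^ t)"
proof -
  obtain T where T: "q ^ T < 2 * q - 1"
    using real_arch_pow_inv[of "2 * q - 1" q] assms by auto
  have "q * q ^ T \<le> q ^ T"
    using assms by (simp add: mult_left_le_one_le)
  then have "1 - q < q * (1 - q ^ T)"
    using T by (simp add: algebra_simps)
  then have "1 < q * (1 - q ^ T) / (1 - q)"
    using assms by (simp add: field_simps)
  also have "q * (1 - q ^ T) / (1 - q) = (\<Sum>t = 1..T. q ^ t)"
    using assms by (simp add: sum.atLeast1_atMost_eq sum_gp_strict flip: sum_distrib_left)
  finally have "1 < (\<Sum>t = 1..T. q ^ t)" .
  then show thesis by (rule that)
qed

lemma card_subsets_card_less:
  assumes "finite A"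
  shows "card {S. S \<subseteq> A \<and> card S < k} = (\<Sum>l<k. card A choose l)"
proof (induction k)
  case 0
  then show ?case by simp
next
  case (Suc k)
  have "{S. S \<subseteq> A \<and> card S < Suc k} = {S. S \<subseteq> A \<and> card S < k} \<union> {S. S \<subseteq> A \<and> card S = k}"
    by auto
  then show ?case
    using Suc \<open>finite A\<close> by (simp add: card_Un_disjoint disjoint_iff n_subsets)
qed

lemma diff_familyI: "A \<in> F \<Longrightarrow> B \<in> F \<Longrightarrow> A - B \<in> diff_family F"
  unfolding diff_family_def by blast

lemma fam_AkI:
  "A \<subseteq> {1..n} \<Longrightarrow> card A = k \<Longrightarrow> 1 \<in> A \<Longrightarrow> x \<in> A \<Longrightarrow> x \<in> {2..k+1} \<Longrightarrow> A \<in> fam_Ak n k"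
  unfolding fam_Ak_def by blast

lemma intersecting_fam_Ak: "0 < k \<Longrightarrow> intersecting (fam_Ak n k)"
  unfolding intersecting_def fam_Ak_def by auto

lemma diff_family_fam_Ak_subset_of_member:
  assumes A: "A \<subseteq> {1..n}" "card A = k" "1 \<in> A" "A \<inter> {2..k+1} \<noteq> {}"
    and S: "S \<subseteq> A" "1 \<notin> S"
    and x: "x \<in> {2..k+1}" "x \<notin> S" "x \<in> A \<or> S \<noteq> {}"
    and n: "k + card S \<le> n"
  shows "S \<in> diff_family (fam_Ak n k)"
proof -
  have fin: "finite A" "finite S"
    using A(1) S(1) by (auto intro: finite_subset)
  \<comment> \<open>\<open>B\<close> trades \<open>S\<close> for \<open>|S|\<close> points outside \<open>A\<close>, among them \<open>x\<close> if \<open>x \<notin> A\<close>, so \<open>x \<in> B\<close>.\<close>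
  have S_nonempty: "x \<notin> A \<Longrightarrow> 0 < card S"
    using x(3) fin(2) by (simp add: card_gt_0_iff)
  then have "card ({x} - A) \<le> card S"
    by (cases "x \<in> A") (simp_all add: insert_Diff_if Suc_le_eq)
  moreover have "card S \<le> card ({1..n} - A)"
    using A n fin by (simp add: card_Diff_subset)
  moreover have "{x} - A \<subseteq> {1..n} - A"
    using x(1) S_nonempty n A(2) by fastforce
  ultimately obtain T where T: "{x} - A \<subseteq> T" "T \<subseteq> {1..n} - A" "card T = card S"
    using exists_subset_between[of "{x} - A" "card S" "{1..n} - A"] by auto
  define B where "B = (A - S) \<union> T"
  have "(A - S) \<inter> T = {}"
    using T(2) by blast
  then have "card B = card (A - S) + card T"
    using fin finite_subset[OF T(2)] by (simp add: B_def card_Un_disjoint)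
  also have "\<dots> = k"
    using T(3) A(2) S(1) fin card_mono[OF fin(1) S(1)] by (simp add: card_Diff_subset)
  finally have "card B = k" .
  then have "B \<in> fam_Ak n k"
    using A S x T by (intro fam_AkI[where x = x]) (auto simp: B_def)
  moreover have "A \<in> fam_Ak n k"
    using A unfolding fam_Ak_def by blast
  moreover have "A - B = S"
    using S T by (auto simp: B_def)
  ultimately show ?thesis
    by (metis diff_familyI)
qed

lemma diff_family_fam_Ak_small_subset:
  assumes S: "S \<subseteq> {2..n}" "card S < k" and meets: "S \<inter> {2..k+1} \<noteq> {} \<or> card S + 2 \<le> k"
    and n: "2 * k \<le> n"
  shows "S \<in> diff_family (fam_Ak n k)"
proof -
  have fin: "finite S"
    using S(1) by (rule finite_subset) simp
  have "\<not> {2..k+1} \<subseteq> S"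
    using card_mono[OF fin, of "{2..k+1}"] S(2) by auto
  then obtain x where x: "x \<in> {2..k+1}" "x \<notin> S"
    by blast
  have core: "1 \<notin> S" "k + card S \<le> n"
    using S n by auto
  show ?thesis
  proof (cases "S \<inter> {2..k+1} = {}")
    case False
    have "insert 1 S \<subseteq> {1..n}" "card (insert 1 S) \<le> k"
      using S core fin by auto
    then obtain A where A: "insert 1 S \<subseteq> A" "A \<subseteq> {1..n}" "card A = k"
      using exists_subset_between[of "insert 1 S" k "{1..n}"] n by auto
    have "A \<inter> {2..k+1} \<noteq> {}" "S \<noteq> {}"
      using A(1) False by blast+
    with A x core show ?thesis
      by (intro diff_family_fam_Ak_subset_of_member[where A = A and x = x]) auto
  next
    case True
    have "insert 1 (insert x S) \<subseteq> {1..n}" "card (insert 1 (insert x S)) \<le> k"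
      using S True x meets fin core n by auto
    then obtain A where A: "insert 1 (insert x S) \<subseteq> A" "A \<subseteq> {1..n}" "card A = k"
      using exists_subset_between[of "insert 1 (insert x S)" k "{1..n}"] n by auto
    have "A \<inter> {2..k+1} \<noteq> {}"
      using A(1) x(1) by blast
    with A x core show ?thesis
      by (intro diff_family_fam_Ak_subset_of_member[where A = A and x = x]) auto
  qed
qed

lemma insert_one_in_diff_family_fam_Ak:
  assumes R: "R \<subseteq> {k+2..n}" "card R + 2 \<le> k" and n: "k < n"
  shows "insert 1 R \<in> diff_family (fam_Ak n k)"
proof -
  have fin: "finite R"
    using R(1) by (rule finite_subset) simp
  have R_ge: "k + 2 \<le> r" if "r \<in> R" for r
    using R(1) that by auto
  have R_outside: "{2..k+1} \<inter> R = {}" "1 \<notin> R" "2 \<notin> R"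
    using R(2) by (auto simp: disjoint_iff dest: R_ge)
  let ?U = "insert 1 ({2..k+1} \<union> R)"
  have "card (insert 1 (insert 2 R)) \<le> k" "k \<le> card ?U"
    using fin R(2) R_outside by (simp_all add: card_Un_disjoint)
  moreover have "insert 1 (insert 2 R) \<subseteq> ?U"
    using R(2) by auto
  ultimately obtain A where A: "insert 1 (insert 2 R) \<subseteq> A" "A \<subseteq> ?U" "card A = k"
    using exists_subset_between[of "insert 1 (insert 2 R)" k ?U] fin by auto
  have "?U \<subseteq> {1..n}"
    using R(1) n by auto
  then have "A \<subseteq> {1..n}"
    using A(2) by blast
  then have "A \<in> fam_Ak n k"
    using A R(2) by (intro fam_AkI[where x = 2]) auto
  moreover have "A - {2..k+1} = insert 1 R"
    using A R_outside by auto
  moreover have "{2..k+1} \<in> fam_Ak n k"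
    unfolding fam_Ak_def by blast
  ultimately show ?thesis
    by (metis diff_familyI)
qed

lemma card_diff_family_fam_Ak_lower_bound:
  assumes k: "0 < k" and n: "2 * k \<le> n"
  shows "(\<Sum>l<k. (n - 1) choose l) + (\<Sum>l<k-1. (n-k-1) choose l)
    \<le> card (diff_family (fam_Ak n k)) + ((n-k-1) choose (k-1))"
proof -
  define P where "P = {S. S \<subseteq> {2..n} \<and> card S < k}"
  define Bad where "Bad = {S. S \<subseteq> {k+2..n} \<and> card S = k-1}"
  define E where "E = {R. R \<subseteq> {k+2..n} \<and> card R < k-1}"
  define D where "D = diff_family (fam_Ak n k)"
  have from_P: "P - Bad \<subseteq> D"
  proof
    fix S assume S: "S \<in> P - Bad"
    then have "S \<subseteq> {2..n}" "card S < k" "S \<notin> Bad"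
      unfolding P_def by auto
    moreover have "S \<subseteq> {k+2..n}" if "S \<inter> {2..k+1} = {}"
    proof
      fix x assume "x \<in> S"
      then have "x \<in> {2..n}" "x \<notin> {2..k+1}"
        using that \<open>S \<subseteq> {2..n}\<close> by blast+
      then show "x \<in> {k+2..n}"
        by simp
    qed
    ultimately have "S \<inter> {2..k+1} \<noteq> {} \<or> card S + 2 \<le> k"
      unfolding Bad_def by auto
    then show "S \<in> D"
      unfolding D_def using diff_family_fam_Ak_small_subset \<open>S \<subseteq> {2..n}\<close> \<open>card S < k\<close> n
      by blast
  qed
  have from_E: "insert 1 ` E \<subseteq> D"
    unfolding D_def E_def using insert_one_in_diff_family_fam_Ak k n by auto
  have "finite D"
  proof -
    have "fam_Ak n k \<subseteq> Pow {1..n}"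
      using n unfolding fam_Ak_def by auto
    then have "D \<subseteq> Pow {1..n}"
      unfolding D_def diff_family_def by blast
    then show ?thesis
      by (rule finite_subset) simp
  qed
  then have "card ((P - Bad) \<union> insert 1 ` E) \<le> card D"
    using from_P from_E by (intro card_mono) auto
  moreover have "card ((P - Bad) \<union> insert 1 ` E) = card (P - Bad) + card E"
  proof -
    have "1 \<notin> R" if "R \<in> E" for R
      using that unfolding E_def by auto
    then have "inj_on (insert 1) E"
      by (meson inj_onI insert_ident)
    moreover have "(P - Bad) \<inter> insert 1 ` E = {}"
      unfolding P_def by auto
    moreover have "finite P" "finite E"
      unfolding P_def E_def by simp_all
    ultimately show ?thesis
      by (simp add: card_Un_disjoint card_image)
  qed
  moreover have "card (P - Bad) + card Bad = card P"
  proof -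
    have "Bad \<subseteq> P" "finite P"
      using k unfolding P_def Bad_def by auto
    then show ?thesis
      by (simp add: card_Diff_subset card_mono finite_subset)
  qed
  moreover have "card P = (\<Sum>l<k. (n - 1) choose l)"
    unfolding P_def by (simp add: card_subsets_card_less)
  moreover have "card E = (\<Sum>l<k-1. (n-k-1) choose l)"
    unfolding E_def by (simp add: card_subsets_card_less numeral_2_eq_2)
  moreover have "card Bad = (n-k-1) choose (k-1)"
    unfolding Bad_def by (simp add: n_subsets numeral_2_eq_2)
  ultimately show ?thesis
    unfolding D_def by linarith
qed

lemma binomial_lt_sum_below_proportional:
  fixes c :: real
  assumes c: "2 < c" "c < 4" and n: "real n = c * real k" "2 * k \<le> n" and "0 < k"
    and T: "1 < (\<Sum>t = 1..T. (2 / c) ^ t)" and large: "(c + 2) * T < (4 - c) * k"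
  shows "(n-k-1) choose (k-1) < (\<Sum>l<k-1. (n-k-1) choose l)"
proof -
  have "(4 - c) * T \<le> (c + 2) * T"
    using c by (intro mult_right_mono) auto
  with large have "(4 - c) * T < (4 - c) * k"
    by linarith
  then have "T \<le> k - 1"
    using c by (simp add: mult_less_cancel_left_pos)
  \<comment> \<open>Since \<open>n - 2k = (c - 2) k\<close>, this is equivalent to \<open>(c + 2) (i + 1) \<le> (4 - c) k\<close>.\<close>
  have "2 / c * (real (n - 2 * k) + real i + 1) \<le> real (k - 1) - real i" if "i < T" for i
  proof -
    have "(c + 2) * (real i + 1) \<le> (c + 2) * T"
      using that c by (intro mult_left_mono) auto
    then show ?thesis
      using large c n \<open>0 < k\<close> by (simp add: field_simps)
  qed
  from binomial_lt_sum_below[OF _ \<open>T \<le> k - 1\<close> T this]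
  show ?thesis
    using c n \<open>0 < k\<close> by (simp add: algebra_simps)
qed

theorem mainTheorem10:
  fixes c :: real
  assumes "2 < c" and "c < 4"
  shows "\<exists>k0::nat. \<forall>k n::nat. k > k0 \<longrightarrow> real n = c * real k \<longrightarrow>
           intersecting (fam_Ak n k) \<and>
           card (diff_family (fam_Ak n k)) > (\<Sum>l<k. (n - 1) choose l)"
proof -
  have "1/2 < 2 / c" "2 / c < 1"
    using assms by (auto simp: field_simps)
  then obtain T where T: "1 < (\<Sum>t = 1..T. (2 / c) ^ t)"
    by (rule geometric_sum_exceeds_one)
  show ?thesis
  proof (intro exI[of _ "nat \<lceil>(c + 2) * T / (4 - c)\<rceil>"] allI impI conjI)
    fix k n :: nat
    assume k: "nat \<lceil>(c + 2) * T / (4 - c)\<rceil> < k" and n: "real n = c * real k"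
    then show "intersecting (fam_Ak n k)"
      by (intro intersecting_fam_Ak) simp
    have "0 < k"
      using k by simp
    have "real (2 * k) \<le> real n"
      using n assms by (simp add: mult_right_mono)
    then have "2 * k \<le> n"
      by linarith
    have "(c + 2) * T / (4 - c) < k"
      using real_nat_ceiling_ge k by (meson le_less_trans of_nat_less_iff)
    then have "(c + 2) * T < (4 - c) * k"
      using assms by (simp add: pos_divide_less_eq mult.commute)
    then have "(n-k-1) choose (k-1) < (\<Sum>l<k-1. (n-k-1) choose l)"
      using binomial_lt_sum_below_proportional assms n \<open>2 * k \<le> n\<close> \<open>0 < k\<close> T by blast
    then show "card (diff_family (fam_Ak n k)) > (\<Sum>l<k. (n - 1) choose l)"
      using card_diff_family_fam_Ak_lower_bound[OF \<open>0 < k\<close> \<open>2 * k \<le> n\<close>] by linarith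
  qed
qed

end
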